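(* Let $\omega=(\alpha,\beta,\delta)\in\Omega$, let $N\ge1$ and $a\in\{-1/2,1/2\}$. Then for every $\lambda=(\lambda_1\ge\dots\ge\lambda_N\ge0)\in\mathbb{J}_N$, \[ P^{\omega}_{N,a}(\lambda)=C_{N,a}\cdot\det\bigl[f_j^{(N,a)}(\lambda_i-i+N)\bigr]_{1\le i,j\le N}\cdot \dim_{SO(2N+1/2+a)}\lambda , \] where \[ f_j^{(N,a)}(k)=\frac{W^{(a,-1/2)}(k)}{\pi}\int_{-1}^1 x^{N-j}E^{\omega}(x)\,\mathsf{J}_k^{(a,-1/2)}(x)\,(1-x)^{a}(1+x)^{-1/2}\,dx \] and $C_{N,1/2}=2^{(N-1)N/2}$, $C_{N,-1/2}=2^{(N-2)(N-1)/2}$. (Here $SO(2N+1/2+a)$ means $SO(2N+1)$ for $a=1/2$ and $SO(2N)$ for $a=-1/2$.)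
   Context: Polynomials: for $s\in\mathbb{Z}_{\ge0}$ and $x=\cos\theta\in[-1,1]$ put $\mathsf{J}^{(-1/2,-1/2)}_s(\cos\theta)=\cos(s\theta)$ and $\mathsf{J}^{(1/2,-1/2)}_s(\cos\theta)=\sin((s+\tfrac12)\theta)/\sin(\theta/2)$ (these are Jacobi polynomials $J^{(a,-1/2)}_s$ divided by $c_s$, $c_0=1$, $c_s=\frac{1\cdot3\cdots(2s-1)}{2\cdot4\cdots(2s)}$); equivalently $\mathsf{J}_s^{(-1/2,-1/2)}(\frac{z+z^{-1}}2)=\frac{z^s+z^{-s}}2$, $\mathsf{J}_s^{(1/2,-1/2)}(\frac{z+z^{-1}}2)=\frac{z^{s+1/2}-z^{-s-1/2}}{z^{1/2}-z^{-1/2}}$. Weights: $W^{(-1/2,-1/2)}(0)=1$, $W^{(-1/2,-1/2)}(s)=2$ for $s>0$, $W^{(1/2,-1/2)}(s)=1$ for all $s\ge0$. Parameters: $\Omega$ is the set of triples $(\alpha,\beta,\delta)$ with $\alpha_1\ge\alpha_2\ge\dots\ge0$, $\beta_1\ge\beta_2\ge\dots\ge0$, $\delta\in\mathbb{R}$, $\sum_i(\alpha_i+\beta_i)\le\delta$; put $\gamma=\delta-\sum_i(\alpha_i+\beta_i)\ge0$ and \[E^{\omega}(x)=e^{\gamma(x-1)}\prod_{i\ge1}\frac{1-\beta_i(1-x)+\beta_i^2(1-x)/2}{1+\alpha_i(1-x)+\alpha_i^2(1-x)/2}.\] $\mathbb{J}_N$ is the set of integer sequences $\lambda_1\ge\dots\ge\lambda_N\ge0$.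 Dimensions: $\dim_{SO(2N+1)}\lambda=\prod_{i<j}\frac{l_i^2-l_j^2}{m_i^2-m_j^2}\prod_i\frac{l_i}{m_i}$ with $l_i=\lambda_i+N-i+\frac12$, $m_i=N-i+\frac12$; $\dim_{SO(2N)}\lambda=\prod_{i<j}\frac{l_i^2-l_j^2}{m_i^2-m_j^2}$ with $l_i=\lambda_i+N-i$, $m_i=N-i$. Characters: for $z_1,\dots,z_N$ on the unit circle, $\zeta_j=(z_j+z_j^{-1})/2$, $\chi^{\lambda}_{SO(2N+1)}(z)=\det[\mathsf{J}^{(1/2,-1/2)}_{\lambda_i-i+N}(\zeta_j)]/\det[(z_j+z_j^{-1})^{N-i}]$ (the irreducible character of $SO(2N+1)$ with highest weight $\lambda$ at an element with eigenvalues $z_j^{\pm1},1$), and $X^{\lambda}_{SO(2N)}(z):=(\chi^{\lambda}_{SO(2N)}+\chi^{\lambda^*}_{SO(2N)})(z)=\det[2\mathsf{J}^{(-1/2,-1/2)}_{\lambda_i-i+N}(\zeta_j)]/\det[(z_j+z_j^{-1})^{N-i}]$, where $\lambda^*=(\lambda_1,\dots,\lambda_{N-1},-\lambda_N)$ (these ratios are Laurent polynomials, extended by continuity). The probability measures $P^\omega_{N,1/2},P^\omega_{N,-1/2}$ on $\mathbb{J}_N$ are defined (via restriction of the extreme character $\chi^\omega$ of $O(\infty)$ to $SO(2N+1)$, resp. $SO(2N)$) by the identities, valid for all $z_j$ on the unit circle, \[\prod_{j=1}^N E^\omega(\zeta_j)=\sum_{\lambda\in\mathbb{J}_N}P^\omega_{N,1/2}(\lambda)\frac{\chi^\lambda_{SO(2N+1)}(z)}{\dim_{SO(2N+1)}\lambda}=\sum_{\lambda\in\mathbb{J}_N}P^\omega_{N,-1/2}(\lambda)\frac{X^\lambda_{SO(2N)}(z)}{2\dim_{SO(2N)}\lambda}.\]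 *)

theory Defs
  imports "HOL-Analysis.Analysis" "Jordan_Normal_Form.Determinant"
begin

(* Parameter space Omega; sequences alpha, beta indexed from 0 (paper: from 1). *)
definition in_Omega :: "(nat \<Rightarrow> real) \<Rightarrow> (nat \<Rightarrow> real) \<Rightarrow> real \<Rightarrow> bool" where
  "in_Omega \<alpha> \<beta> \<delta> \<longleftrightarrow>
     (\<forall>i. \<alpha> (Suc i) \<le> \<alpha> i) \<and> (\<forall>i. 0 \<le> \<alpha> i) \<and>
     (\<forall>i. \<beta> (Suc i) \<le> \<beta> i) \<and> (\<forall>i. 0 \<le> \<beta> i) \<and>
     summable (\<lambda>i. \<alpha> i + \<beta> i) \<and> (\<Sum>i. \<alpha> i + \<beta> i) \<le> \<delta>"

definition gamma_param :: "(nat \<Rightarrow> real) \<Rightarrow> (nat \<Rightarrow> real) \<Rightarrow> real \<Rightarrow> real" where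
  "gamma_param \<alpha> \<beta> \<delta> = \<delta> - (\<Sum>i. \<alpha> i + \<beta> i)"

definition E_omega :: "(nat \<Rightarrow> real) \<Rightarrow> (nat \<Rightarrow> real) \<Rightarrow> real \<Rightarrow> real \<Rightarrow> real" where
  "E_omega \<alpha> \<beta> \<delta> x = exp (gamma_param \<alpha> \<beta> \<delta> * (x - 1)) *
     prodinf (\<lambda>i. (1 - \<beta> i * (1 - x) + (\<beta> i)\<^sup>2 * (1 - x) / 2) /
                   (1 + \<alpha> i * (1 - x) + (\<alpha> i)\<^sup>2 * (1 - x) / 2))"

(* J^{(-1/2,-1/2)}_s(cos t) = cos(s t) *)
definition Jm :: "nat \<Rightarrow> real \<Rightarrow> real" where
  "Jm s x = cos (real s * arccos x)"

(* J^{(1/2,-1/2)}_s(cos t) = sin((s+1/2)t)/sin(t/2) = 1 + 2 * sum_{k=1..s} cos(k t)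
   (expansion of (z^{s+1/2}-z^{-s-1/2})/(z^{1/2}-z^{-1/2}) = sum_{k=-s..s} z^k) *)
definition Jp :: "nat \<Rightarrow> real \<Rightarrow> real" where
  "Jp s x = 1 + 2 * (\<Sum>k=1..s. cos (real k * arccos x))"

definition Jac :: "real \<Rightarrow> nat \<Rightarrow> real \<Rightarrow> real" where
  "Jac a s x = (if a = 1/2 then Jp s x else Jm s x)"

definition Wt :: "real \<Rightarrow> nat \<Rightarrow> real" where
  "Wt a s = (if a = 1/2 then 1 else (if s = 0 then 1 else 2))"

(* J_N : nonincreasing sequences of N nonnegative integers, as lists (index i+1 of paper = list index i) *)
definition JN :: "nat \<Rightarrow> nat list set" where
  "JN N = {lam. length lam = N \<and> sorted_wrt (\<ge>) lam}"

definition dimB :: "nat \<Rightarrow> nat list \<Rightarrow> real" where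
  "dimB N lam =
     (let l = (\<lambda>i. real (lam ! i) + real N - real i - 1/2);
          m = (\<lambda>i. real N - real i - 1/2)
      in (\<Prod>i<N. \<Prod>j\<in>{i<..<N}. ((l i)\<^sup>2 - (l j)\<^sup>2) / ((m i)\<^sup>2 - (m j)\<^sup>2)) *
         (\<Prod>i<N. l i / m i))"

definition dimD :: "nat \<Rightarrow> nat list \<Rightarrow> real" where
  "dimD N lam =
     (let l = (\<lambda>i. real (lam ! i) + real N - real i - 1);
          m = (\<lambda>i. real N - real i - 1)
      in (\<Prod>i<N. \<Prod>j\<in>{i<..<N}. ((l i)\<^sup>2 - (l j)\<^sup>2) / ((m i)\<^sup>2 - (m j)\<^sup>2)))"

(* denominator det[(z_j+z_j^{-1})^{N-i}] with z_j = e^{i theta_j} *)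
definition char_denom :: "nat \<Rightarrow> (nat \<Rightarrow> real) \<Rightarrow> real" where
  "char_denom N \<theta> = Determinant.det (Matrix.mat N N (\<lambda>(i, j). (2 * cos (\<theta> j)) ^ (N - 1 - i)))"

(* chi^lambda_{SO(2N+1)} at eigenvalues e^{+-i theta_j}, 1 *)
definition chiB :: "nat \<Rightarrow> nat list \<Rightarrow> (nat \<Rightarrow> real) \<Rightarrow> real" where
  "chiB N lam \<theta> = Determinant.det (Matrix.mat N N (\<lambda>(i, j). Jp (lam ! i + (N - 1 - i)) (cos (\<theta> j))))
                   / char_denom N \<theta>"

(* X^lambda_{SO(2N)} = chi^lambda + chi^{lambda*} at eigenvalues e^{+-i theta_j} *)
definition XD :: "nat \<Rightarrow> nat list \<Rightarrow> (nat \<Rightarrow> real) \<Rightarrow> real" where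
  "XD N lam \<theta> = Determinant.det (Matrix.mat N N (\<lambda>(i, j). 2 * Jm (lam ! i + (N - 1 - i)) (cos (\<theta> j))))
                 / char_denom N \<theta>"

(* P is the probability measure P^omega_{N,a} on J_N: a probability vector on J_N satisfying
   the defining expansion identity (required at all points where the Vandermonde-type
   denominator does not vanish, i.e. cos theta_j pairwise distinct; elsewhere the
   characters are defined by continuity). *)
definition is_P_omega ::
  "(nat \<Rightarrow> real) \<Rightarrow> (nat \<Rightarrow> real) \<Rightarrow> real \<Rightarrow> nat \<Rightarrow> real \<Rightarrow> (nat list \<Rightarrow> real) \<Rightarrow> bool" where
  "is_P_omega \<alpha> \<beta> \<delta> N a P \<longleftrightarrow>
     (\<forall>lam\<in>JN N. 0 \<le> P lam) \<and> (P has_sum 1) (JN N) \<and>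
     (\<forall>\<theta>::nat \<Rightarrow> real. inj_on (\<lambda>j. cos (\<theta> j)) {..<N} \<longrightarrow>
        (if a = 1/2 then
           ((\<lambda>lam. P lam * chiB N lam \<theta> / dimB N lam) has_sum (\<Prod>j<N. E_omega \<alpha> \<beta> \<delta> (cos (\<theta> j)))) (JN N)
         else
           ((\<lambda>lam. P lam * XD N lam \<theta> / (2 * dimD N lam)) has_sum (\<Prod>j<N. E_omega \<alpha> \<beta> \<delta> (cos (\<theta> j)))) (JN N)))"

definition f_fun :: "(nat \<Rightarrow> real) \<Rightarrow> (nat \<Rightarrow> real) \<Rightarrow> real \<Rightarrow> nat \<Rightarrow> real \<Rightarrow> nat \<Rightarrow> nat \<Rightarrow> real" where
  "f_fun \<alpha> \<beta> \<delta> N a j k = Wt a k / pi *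
     (LINT x:{-1..1}|lborel. x ^ (N - j) * E_omega \<alpha> \<beta> \<delta> x * Jac a k x *
                             (1 - x) powr a * (1 + x) powr (-1/2))"

definition C_const :: "nat \<Rightarrow> real \<Rightarrow> real" where
  "C_const N a = (if a = 1/2 then 2 powr ((real N - 1) * real N / 2)
                  else 2 powr ((real N - 2) * (real N - 1) / 2))"

definition dim_a :: "nat \<Rightarrow> real \<Rightarrow> nat list \<Rightarrow> real" where
  "dim_a N a lam = (if a = 1/2 then dimB N lam else dimD N lam)"

end

theory Submission
  imports Defs
begin

text \<open>Multiply the defining expansion of \<open>P\<close> by the Weyl denominator \<open>char_denom\<close>, so that
  each term becomes \<open>P lam / dim lam\<close> times a determinant \<open>det [J_{l_i}(cos \<theta>_j)]\<close> with
  \<open>l_i = lam_i - i + N\<close>, and integrate against \<open>\<Prod>_j J_{k_j}(cos \<theta>_j) w(\<theta>_j)\<close> over \<open>[0, pi]^N\<close>,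
  where \<open>k\<close> belongs to a fixed \<open>lam\<close> and \<open>w\<close> is the Jacobi weight in the variable \<open>\<theta>\<close>.
  Since the \<open>l_i\<close> are strictly decreasing, orthogonality of the Jacobi polynomials kills
  every term except the one of \<open>lam\<close>. On the other side \<open>char_denom\<close> is a Vandermonde
  determinant in \<open>2 cos \<theta>_j\<close>, so the integral factorises (Andreief) into a determinant of
  moments, which after the substitution \<open>x = cos \<theta>\<close> are the numbers \<open>f_j(l_i)\<close>. Summation and
  integration may be exchanged because the coefficients \<open>P lam / dim lam\<close> are summable and
  the integrands are uniformly bounded.\<close>

section \<open>Jacobi polynomials on the circle\<close>

lemma Jp_cos: "0 \<le> t \<Longrightarrow> t \<le> pi \<Longrightarrow> Jp l (cos t) = 1 + 2 * (\<Sum>k=1..l. cos (real k * t))"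
  unfolding Jp_def by (simp add: arccos_cos)

lemma Jm_cos: "0 \<le> t \<Longrightarrow> t \<le> pi \<Longrightarrow> Jm l (cos t) = cos (real l * t)"
  unfolding Jm_def by (simp add: arccos_cos)

lemma Dirichlet_kernel_mult_sin_half:
  fixes t :: real
  shows "(1 + 2 * (\<Sum>k=1..l. cos (real k * t))) * sin (t/2) = sin ((real l + 1/2) * t)"
proof (induction l)
  case 0
  then show ?case by simp
next
  case (Suc l)
  have "2 * cos (real (Suc l) * t) * sin (t/2)
      = sin (real (Suc l) * t + t/2) - sin (real (Suc l) * t - t/2)"
    by (simp add: sin_add sin_diff)
  also have "\<dots> = sin ((real (Suc l) + 1/2) * t) - sin ((real l + 1/2) * t)"
    by (simp add: algebra_simps)
  finally show ?case using Suc by (simp add: algebra_simps)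
qed

lemma Jp_cos_mult_sin_half:
  "0 \<le> t \<Longrightarrow> t \<le> pi \<Longrightarrow> Jp l (cos t) * sin (t/2) = sin ((real l + 1/2) * t)"
  using Dirichlet_kernel_mult_sin_half by (simp add: Jp_cos)

lemma one_minus_cos_eq: "1 - cos (t::real) = 2 * (sin (t/2))\<^sup>2"
  using cos_double_sin[of "t/2"] by simp

lemma Jp_cos_mult_Jp_cos:
  assumes "0 \<le> t" "t \<le> pi"
  shows "Jp l (cos t) * Jp k (cos t) * (1 - cos t)
       = cos (real_of_int (int l - int k) * t) - cos (real_of_int (int l + int k + 1) * t)"
proof -
  have "Jp l (cos t) * Jp k (cos t) * (1 - cos t)
      = 2 * (Jp l (cos t) * sin (t/2)) * (Jp k (cos t) * sin (t/2))"
    by (simp add: one_minus_cos_eq power2_eq_square)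
  also have "\<dots> = 2 * sin ((real l + 1/2) * t) * sin ((real k + 1/2) * t)"
    using Jp_cos_mult_sin_half assms by simp
  also have "\<dots> = cos ((real l + 1/2) * t - (real k + 1/2) * t) - cos ((real l + 1/2) * t + (real k + 1/2) * t)"
    by (simp add: cos_add cos_diff)
  also have "\<dots> = cos (real_of_int (int l - int k) * t) - cos (real_of_int (int l + int k + 1) * t)"
    by (simp add: algebra_simps)
  finally show ?thesis .
qed

lemma Jm_cos_mult_Jm_cos:
  assumes "0 \<le> t" "t \<le> pi"
  shows "Jm l (cos t) * Jm k (cos t)
       = (cos (real_of_int (int l - int k) * t) + cos (real_of_int (int l + int k) * t)) / 2"
proof -
  have "Jm l (cos t) * Jm k (cos t) = (cos (real l * t - real k * t) + cos (real l * t + real k * t)) / 2"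
    using assms by (simp add: Jm_cos cos_add cos_diff)
  then show ?thesis by (simp add: algebra_simps)
qed

lemma integrable_cos_on_0_pi: "integrable lborel (\<lambda>t. indicator {0..pi} t * cos (c * t))"
proof -
  have "set_integrable lborel {0..pi} (\<lambda>t. cos (c * t))"
    by (intro borel_integrable_atLeastAtMost' continuous_intros)
  then show ?thesis by (simp add: set_integrable_def)
qed

lemma integral_cos_int_on_0_pi:
  fixes m :: int
  shows "integral\<^sup>L lborel (\<lambda>t. indicator {0..pi} t * cos (real_of_int m * t)) = (if m = 0 then pi else 0)"
proof (cases "m = 0")
  case True
  have "integral\<^sup>L lborel (\<lambda>t. indicator {0..pi} t *\<^sub>R (1::real)) = pi - 0"
    by (rule integral_FTC_atLeastAtMost[where F="\<lambda>t. t"]) (auto intro!: derivative_eq_intros)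
  then show ?thesis using True by simp
next
  case False
  have "integral\<^sup>L lborel (\<lambda>t. indicator {0..pi} t *\<^sub>R cos (real_of_int m * t))
     = sin (real_of_int m * pi) / real_of_int m - sin (real_of_int m * 0) / real_of_int m"
  proof (rule integral_FTC_atLeastAtMost[where F="\<lambda>t. sin (real_of_int m * t) / real_of_int m"])
    fix x :: real
    have "((\<lambda>t. sin (real_of_int m * t) / real_of_int m) has_real_derivative cos (real_of_int m * x))
            (at x within {0..pi})"
      by (auto intro!: derivative_eq_intros simp: False)
    then show "((\<lambda>t. sin (real_of_int m * t) / real_of_int m) has_vector_derivative cos (real_of_int m * x))
                 (at x within {0..pi})"
      by (simp add: has_real_derivative_iff_has_vector_derivative)
  qed (auto intro!: continuous_intros)
  then show ?thesis using False sin_zero_iff_int2[of "real_of_int m * pi"] by auto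
qed

text \<open>The substitution \<open>x = cos t\<close> turns \<open>Jac a k\<close> into a trigonometric polynomial and the
  Jacobi weight \<open>(1 - x) powr a * (1 + x) powr (-1/2) dx\<close> into \<open>jacobi_weight a t dt\<close>.\<close>

definition jacobi_trig :: "real \<Rightarrow> nat \<Rightarrow> real \<Rightarrow> real" where
  "jacobi_trig a k t = Jac a k (cos t)"

definition jacobi_weight :: "real \<Rightarrow> real \<Rightarrow> real" where
  "jacobi_weight a t = (if a = 1/2 then 1 - cos t else 1)"

definition jacobi_norm :: "real \<Rightarrow> nat \<Rightarrow> real" where
  "jacobi_norm a k = pi / Wt a k"

lemma Wt_pos: "Wt a k > 0"
  unfolding Wt_def by auto

lemma jacobi_norm_pos: "jacobi_norm a k > 0"
  unfolding jacobi_norm_def using Wt_pos by simp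

lemma continuous_on_Jac: "continuous_on {-1..1} (Jac a k)"
proof -
  have "continuous_on {-1..1} (\<lambda>x. cos (real j * arccos x))" for j :: nat
    by (intro continuous_intros) auto
  then show ?thesis
    unfolding Jac_def Jp_def Jm_def by (cases "a = 1/2") (auto intro!: continuous_intros)
qed

lemma continuous_jacobi_trig: "continuous_on UNIV (jacobi_trig a k)"
  unfolding jacobi_trig_def
  by (rule continuous_on_compose2[OF continuous_on_Jac]) (auto intro!: continuous_intros)

lemma borel_measurable_jacobi_trig [measurable]: "jacobi_trig a k \<in> borel_measurable borel"
  by (rule borel_measurable_continuous_onI[OF continuous_jacobi_trig])

lemma borel_measurable_jacobi_weight [measurable]: "jacobi_weight a \<in> borel_measurable borel"
  unfolding jacobi_weight_def by measurable

lemma abs_jacobi_trig_le: "\<bar>jacobi_trig a k t\<bar> \<le> 2 * real k + 1"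
proof (cases "a = 1/2")
  case True
  have "\<bar>\<Sum>j=1..k. cos (real j * arccos (cos t))\<bar> \<le> (\<Sum>j=1..k. (1::real))"
    by (rule order_trans[OF sum_abs]) (intro sum_mono, simp)
  then show ?thesis
    using True by (simp add: jacobi_trig_def Jac_def Jp_def)
next
  case False
  then show ?thesis
    unfolding jacobi_trig_def Jac_def Jm_def by (simp add: order_trans[OF abs_cos_le_one])
qed

lemma abs_jacobi_trig_mult_weight_le: "\<bar>jacobi_trig a l t * jacobi_weight a t\<bar> \<le> 2"
proof (cases "a = 1/2")
  case True
  define s where "s = arccos (cos t)"
  have s: "0 \<le> s" "s \<le> pi" "cos t = cos s"
    unfolding s_def by (auto simp: arccos_lbound arccos_ubound)
  have "jacobi_trig a l t * jacobi_weight a t = 2 * (Jp l (cos s) * sin (s/2)) * sin (s/2)"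
    using True s(3) by (simp add: jacobi_trig_def Jac_def jacobi_weight_def one_minus_cos_eq power2_eq_square)
  also have "\<dots> = 2 * (sin ((real l + 1/2) * s) * sin (s/2))"
    using Jp_cos_mult_sin_half[OF s(1,2)] by simp
  finally show ?thesis
    by (simp add: abs_mult mult_le_one)
next
  case False
  then show ?thesis
    unfolding jacobi_trig_def Jac_def Jm_def jacobi_weight_def by (auto intro: order_trans[OF abs_cos_le_one])
qed

lemma integrable_bounded_on_0_pi:
  fixes f :: "real \<Rightarrow> real"
  assumes "f \<in> borel_measurable borel" "\<And>t. t \<in> {0..pi} \<Longrightarrow> \<bar>f t\<bar> \<le> B"
  shows "integrable lborel (\<lambda>t. indicator {0..pi} t * f t)"
  using integrableI_bounded_set_indicator[of "{0..pi}" lborel f B] assms by simp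

lemma jacobi_orthogonality:
  assumes "a = 1/2 \<or> a = -1/2"
  shows "integral\<^sup>L lborel (\<lambda>t. indicator {0..pi} t * (jacobi_trig a l t * jacobi_trig a k t * jacobi_weight a t))
       = (if l = k then jacobi_norm a k else 0)"
proof (cases "a = 1/2")
  case True
  let ?c = "\<lambda>m t. indicator {0..pi} t * cos (real_of_int m * t)"
  have "integral\<^sup>L lborel (\<lambda>t. indicator {0..pi} t * (jacobi_trig a l t * jacobi_trig a k t * jacobi_weight a t))
      = integral\<^sup>L lborel (\<lambda>t. ?c (int l - int k) t - ?c (int l + int k + 1) t)"
    by (intro Bochner_Integration.integral_cong refl)
       (auto simp: indicator_def True jacobi_trig_def Jac_def jacobi_weight_def Jp_cos_mult_Jp_cos)
  also have "\<dots> = integral\<^sup>L lborel (?c (int l - int k)) - integral\<^sup>L lborel (?c (int l + int k + 1))"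
    by (rule Bochner_Integration.integral_diff) (rule integrable_cos_on_0_pi)+
  also have "\<dots> = (if l = k then pi else 0) - 0"
    by (simp only: integral_cos_int_on_0_pi) simp
  finally show ?thesis
    by (simp add: jacobi_norm_def Wt_def True)
next
  case False
  with assms have a: "a = -1/2" by auto
  let ?c = "\<lambda>m t. indicator {0..pi} t * cos (real_of_int m * t)"
  have "integral\<^sup>L lborel (\<lambda>t. indicator {0..pi} t * (jacobi_trig a l t * jacobi_trig a k t * jacobi_weight a t))
      = integral\<^sup>L lborel (\<lambda>t. (?c (int l - int k) t + ?c (int l + int k) t) / 2)"
    by (intro Bochner_Integration.integral_cong refl)
       (auto simp: indicator_def a jacobi_trig_def Jac_def jacobi_weight_def Jm_cos_mult_Jm_cos)
  also have "\<dots> = (integral\<^sup>L lborel (?c (int l - int k)) + integral\<^sup>L lborel (?c (int l + int k))) / 2"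
    by (subst integral_divide_zero, subst Bochner_Integration.integral_add)
       (rule integrable_cos_on_0_pi | simp)+
  also have "\<dots> = ((if l = k then pi else 0) + (if l + k = 0 then pi else 0)) / 2"
    by (simp only: integral_cos_int_on_0_pi) simp
  finally show ?thesis
    using a by (auto simp: jacobi_norm_def Wt_def)
qed

section \<open>The function \<open>E_omega\<close>\<close>

definition E_factor :: "(nat \<Rightarrow> real) \<Rightarrow> (nat \<Rightarrow> real) \<Rightarrow> nat \<Rightarrow> real \<Rightarrow> real" where
  "E_factor \<alpha> \<beta> i x = (1 - \<beta> i * (1 - x) + (\<beta> i)\<^sup>2 * (1 - x) / 2) /
                        (1 + \<alpha> i * (1 - x) + (\<alpha> i)\<^sup>2 * (1 - x) / 2)"

definition E_factor_bound :: "(nat \<Rightarrow> real) \<Rightarrow> (nat \<Rightarrow> real) \<Rightarrow> nat \<Rightarrow> real" where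
  "E_factor_bound \<alpha> \<beta> i = 2 * \<alpha> i + (\<alpha> i)\<^sup>2 + 2 * \<beta> i + (\<beta> i)\<^sup>2"

lemma E_omega_eq: "E_omega \<alpha> \<beta> \<delta> x = exp (gamma_param \<alpha> \<beta> \<delta> * (x - 1)) * prodinf (\<lambda>i. E_factor \<alpha> \<beta> i x)"
  unfolding E_omega_def E_factor_def ..

lemma summable_square_if_decseq:
  fixes u :: "nat \<Rightarrow> real"
  assumes "\<And>i. 0 \<le> u i" "decseq u" "summable u"
  shows "summable (\<lambda>i. (u i)\<^sup>2)"
proof (rule summable_comparison_test[where g="\<lambda>i. u 0 * u i"])
  have "u i \<le> u 0" for i
    using \<open>decseq u\<close> by (simp add: decseq_def)
  then show "\<exists>N. \<forall>n\<ge>N. norm ((u n)\<^sup>2) \<le> u 0 * u n"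
    using assms(1) by (auto simp: power2_eq_square intro!: mult_right_mono)
  show "summable (\<lambda>i. u 0 * u i)"
    using assms(3) by (rule summable_mult)
qed

lemma in_OmegaD:
  assumes "in_Omega \<alpha> \<beta> \<delta>"
  shows "\<And>i. 0 \<le> \<alpha> i" "\<And>i. 0 \<le> \<beta> i" "summable (E_factor_bound \<alpha> \<beta>)"
    "gamma_param \<alpha> \<beta> \<delta> \<ge> 0"
proof -
  have A: "decseq \<alpha>" "\<forall>i. 0 \<le> \<alpha> i" "decseq \<beta>" "\<forall>i. 0 \<le> \<beta> i"
    "summable (\<lambda>i. \<alpha> i + \<beta> i)" "(\<Sum>i. \<alpha> i + \<beta> i) \<le> \<delta>"
    using assms unfolding in_Omega_def by (auto simp: decseq_Suc_iff)
  show "\<And>i. 0 \<le> \<alpha> i" "\<And>i. 0 \<le> \<beta> i"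
    using A by auto
  have "summable \<alpha>" "summable \<beta>"
    by (rule summable_comparison_test[OF _ A(5)]; use A in auto)+
  then show "summable (E_factor_bound \<alpha> \<beta>)"
    unfolding E_factor_bound_def
    using A by (intro summable_add summable_mult summable_square_if_decseq) auto
  show "gamma_param \<alpha> \<beta> \<delta> \<ge> 0"
    using A unfolding gamma_param_def by simp
qed

lemma abs_E_factor_minus_1_le:
  assumes "0 \<le> \<alpha> i" "0 \<le> \<beta> i" "-1 \<le> x" "x \<le> 1"
  shows "\<bar>E_factor \<alpha> \<beta> i x - 1\<bar> \<le> E_factor_bound \<alpha> \<beta> i"
proof -
  define t a b where "t = 1 - x" and "a = \<alpha> i" and "b = \<beta> i"
  have t: "0 \<le> t" "t \<le> 2" and ab: "0 \<le> a" "0 \<le> b"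
    using assms unfolding t_def a_def b_def by auto
  define D where "D = 1 + a * t + a\<^sup>2 * t / 2"
  have D: "D \<ge> 1"
    unfolding D_def using ab t by simp
  have "E_factor \<alpha> \<beta> i x - 1 = (- b * t + b\<^sup>2 * t / 2 - a * t - a\<^sup>2 * t / 2) / D"
    using D unfolding E_factor_def t_def[symmetric] a_def[symmetric] b_def[symmetric] D_def
    by (simp add: field_simps)
  also have "\<bar>\<dots>\<bar> \<le> \<bar>- b * t + b\<^sup>2 * t / 2 - a * t - a\<^sup>2 * t / 2\<bar>"
    using D by (simp add: abs_divide divide_le_eq order_trans[OF _ mult_left_mono[of 1 D]])
  also have "\<dots> \<le> b * t + b\<^sup>2 * t / 2 + a * t + a\<^sup>2 * t / 2"
    using ab t by (simp add: abs_le_iff)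
  also have "\<dots> \<le> E_factor_bound \<alpha> \<beta> i"
  proof -
    have "b * t \<le> b * 2" "a * t \<le> a * 2" "b\<^sup>2 * t \<le> b\<^sup>2 * 2" "a\<^sup>2 * t \<le> a\<^sup>2 * 2"
      using ab t by (auto intro: mult_left_mono)
    then show ?thesis
      unfolding E_factor_bound_def a_def[symmetric] b_def[symmetric] by linarith
  qed
  finally show ?thesis .
qed

lemma convergent_prod_E_factor:
  assumes "in_Omega \<alpha> \<beta> \<delta>" "-1 \<le> x" "x \<le> 1"
  shows "convergent_prod (\<lambda>i. E_factor \<alpha> \<beta> i x)"
proof -
  note \<Omega> = in_OmegaD[OF assms(1)]
  have "summable (\<lambda>i. norm (E_factor \<alpha> \<beta> i x - 1))"
    by (rule summable_comparison_test[OF _ \<Omega>(3)])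
       (use abs_E_factor_minus_1_le[OF \<Omega>(1,2) assms(2,3)] in auto)
  then show ?thesis
    by (intro abs_convergent_prod_imp_convergent_prod) (simp add: abs_convergent_prod_conv_summable)
qed

lemma E_omega_LIMSEQ:
  assumes "in_Omega \<alpha> \<beta> \<delta>" "-1 \<le> x" "x \<le> 1"
  shows "(\<lambda>n. exp (gamma_param \<alpha> \<beta> \<delta> * (x - 1)) * (\<Prod>i\<le>n. E_factor \<alpha> \<beta> i x)) \<longlonglongrightarrow> E_omega \<alpha> \<beta> \<delta> x"
  unfolding E_omega_eq
  by (intro tendsto_mult tendsto_const convergent_prod_LIMSEQ convergent_prod_E_factor[OF assms])

lemma E_omega_bounded:
  assumes "in_Omega \<alpha> \<beta> \<delta>"
  obtains B where "\<And>x. -1 \<le> x \<Longrightarrow> x \<le> 1 \<Longrightarrow> \<bar>E_omega \<alpha> \<beta> \<delta> x\<bar> \<le> B"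
proof
  note \<Omega> = in_OmegaD[OF assms]
  let ?B = "exp (suminf (E_factor_bound \<alpha> \<beta>))"
  fix x :: real
  assume x: "-1 \<le> x" "x \<le> 1"
  have partial: "\<bar>\<Prod>i\<le>n. E_factor \<alpha> \<beta> i x\<bar> \<le> ?B" for n
  proof -
    have "\<bar>\<Prod>i\<le>n. E_factor \<alpha> \<beta> i x\<bar> = (\<Prod>i\<le>n. \<bar>E_factor \<alpha> \<beta> i x\<bar>)"
      by (rule abs_prod)
    also have "\<dots> \<le> (\<Prod>i\<le>n. exp (E_factor_bound \<alpha> \<beta> i))"
    proof (rule prod_mono)
      fix i
      have "\<bar>E_factor \<alpha> \<beta> i x - 1\<bar> \<le> E_factor_bound \<alpha> \<beta> i"
        by (rule abs_E_factor_minus_1_le) (use \<Omega>(1,2) x in auto)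
      then have "\<bar>E_factor \<alpha> \<beta> i x\<bar> \<le> 1 + E_factor_bound \<alpha> \<beta> i"
        by linarith
      also have "\<dots> \<le> exp (E_factor_bound \<alpha> \<beta> i)"
        by (rule exp_ge_add_one_self)
      finally show "0 \<le> \<bar>E_factor \<alpha> \<beta> i x\<bar> \<and> \<bar>E_factor \<alpha> \<beta> i x\<bar> \<le> exp (E_factor_bound \<alpha> \<beta> i)"
        by simp
    qed
    also have "\<dots> = exp (\<Sum>i\<le>n. E_factor_bound \<alpha> \<beta> i)"
      by (simp add: exp_sum)
    also have "\<dots> \<le> ?B"
      using sum_le_suminf[OF \<Omega>(3), of "{..n}"] \<Omega>(1,2) by (simp add: E_factor_bound_def)
    finally show ?thesis .
  qed
  have "(\<lambda>n. \<bar>\<Prod>i\<le>n. E_factor \<alpha> \<beta> i x\<bar>) \<longlonglongrightarrow> \<bar>prodinf (\<lambda>i. E_factor \<alpha> \<beta> i x)\<bar>"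
    by (intro tendsto_rabs convergent_prod_LIMSEQ convergent_prod_E_factor[OF assms x])
  then have "\<bar>prodinf (\<lambda>i. E_factor \<alpha> \<beta> i x)\<bar> \<le> ?B"
    by (rule LIMSEQ_le_const2) (use partial in auto)
  moreover have "exp (gamma_param \<alpha> \<beta> \<delta> * (x - 1)) \<le> 1"
    using \<Omega>(4) x by (simp add: mult_nonneg_nonpos)
  ultimately show "\<bar>E_omega \<alpha> \<beta> \<delta> x\<bar> \<le> ?B"
    unfolding E_omega_eq abs_mult using mult_mono[of _ 1 _ ?B] by fastforce
qed

lemma borel_measurable_E_factor [measurable]: "E_factor \<alpha> \<beta> i \<in> borel_measurable borel"
  unfolding E_factor_def by measurable

lemma borel_measurable_E_omega_cos:
  assumes "in_Omega \<alpha> \<beta> \<delta>"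
  shows "(\<lambda>t. E_omega \<alpha> \<beta> \<delta> (cos t)) \<in> borel_measurable borel"
proof (rule borel_measurable_LIMSEQ_real)
  show "(\<lambda>n. exp (gamma_param \<alpha> \<beta> \<delta> * (cos t - 1)) * (\<Prod>i\<le>n. E_factor \<alpha> \<beta> i (cos t)))
          \<longlonglongrightarrow> E_omega \<alpha> \<beta> \<delta> (cos t)" for t
    by (rule E_omega_LIMSEQ[OF assms]) auto
qed measurable

lemma borel_measurable_indicator_E_omega:
  assumes "in_Omega \<alpha> \<beta> \<delta>"
  shows "(\<lambda>x. indicator {-1..1} x * E_omega \<alpha> \<beta> \<delta> x) \<in> borel_measurable borel"
proof (rule borel_measurable_LIMSEQ_real)
  show "(\<lambda>n. indicator {-1..1} x * (exp (gamma_param \<alpha> \<beta> \<delta> * (x - 1)) * (\<Prod>i\<le>n. E_factor \<alpha> \<beta> i x)))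
          \<longlonglongrightarrow> indicator {-1..1} x * E_omega \<alpha> \<beta> \<delta> x" for x
    by (cases "x \<in> {-1..1}") (auto intro!: E_omega_LIMSEQ[OF assms])
qed measurable

section \<open>The substitution \<open>x = cos t\<close>\<close>

lemma set_integrable_by_neg_cos_substitution:
  fixes G :: "real \<Rightarrow> real"
  assumes meas: "(\<lambda>y. indicator {-1..1} y * G y) \<in> borel_measurable borel"
    and bound: "\<And>t. t \<in> {0..pi} \<Longrightarrow> \<bar>G (- cos t) * sin t\<bar> \<le> B"
  shows "set_integrable lborel {-1..1} G"
proof -
  have deriv: "\<And>x. x \<in> {0..pi} \<Longrightarrow> ((\<lambda>t. - cos t) has_real_derivative sin x) (at x)"
    by (auto intro!: derivative_eq_intros)
  have sin_nonneg: "\<And>x. x \<in> {0..pi} \<Longrightarrow> 0 \<le> sin x"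
    by (auto intro: sin_ge_zero)
  have "set_borel_measurable borel {-1..1} (\<lambda>y. \<bar>G y\<bar>)"
  proof -
    have "(\<lambda>y. \<bar>indicator {-1..1} y * G y\<bar>) \<in> borel_measurable borel"
      using meas by measurable
    then show ?thesis unfolding set_borel_measurable_def by (simp add: abs_mult)
  qed
  then have "(\<integral>\<^sup>+y. ennreal (\<bar>G y\<bar> * indicator {-1..1} y) \<partial>lborel)
           = (\<integral>\<^sup>+t. ennreal (\<bar>G (- cos t)\<bar> * sin t * indicator {0..pi} t) \<partial>lborel)"
    using nn_integral_substitution[where g="\<lambda>t. - cos t" and g'=sin and a=0 and b=pi
        and f="\<lambda>y. \<bar>G y\<bar>", OF _ deriv _ sin_nonneg]
    by (simp add: continuous_on_sin)
  also have "\<dots> \<le> (\<integral>\<^sup>+t. ennreal B * indicator {0..pi} t \<partial>lborel)"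
  proof (intro nn_integral_mono)
    fix t
    show "ennreal (\<bar>G (- cos t)\<bar> * sin t * indicator {0..pi} t) \<le> ennreal B * indicator {0..pi} t"
    proof (cases "t \<in> {0..pi}")
      case True
      then have "\<bar>G (- cos t)\<bar> * sin t = \<bar>G (- cos t) * sin t\<bar>"
        using sin_nonneg by (simp add: abs_mult)
      then show ?thesis
        using True bound[OF True] by (simp add: ennreal_leI)
    qed simp
  qed
  also have "\<dots> < \<infinity>"
    by (simp add: nn_integral_cmult_indicator ennreal_mult_less_top)
  finally have "(\<integral>\<^sup>+y. ennreal (norm (indicator {-1..1} y *\<^sub>R G y)) \<partial>lborel) < \<infinity>"
    by (simp add: abs_mult mult.commute)
  with meas show ?thesis
    unfolding set_integrable_def by (simp add: integrable_iff_bounded)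
qed

lemma set_integral_cos_substitution:
  fixes F :: "real \<Rightarrow> real"
  assumes meas: "(\<lambda>x. indicator {-1..1} x * F x) \<in> borel_measurable borel"
    and bound: "\<And>t. t \<in> {0..pi} \<Longrightarrow> \<bar>F (cos t) * sin t\<bar> \<le> B"
  shows "(LINT x:{-1..1}|lborel. F x) = (LBINT t. F (cos t) * sin t * indicator {0..pi} t)"
proof -
  \<comment> \<open>\<open>-cos\<close> is increasing on \<open>[0, pi]\<close>, so substitute into the reflection \<open>y \<mapsto> F (- y)\<close>.\<close>
  define G where "G y = F (- y)" for y
  have ind: "indicator {-1..1} (- y) = (indicator {-1..1} y :: real)" for y :: real
    by (auto simp: indicator_def)
  have "(\<lambda>y. (\<lambda>x. indicator {-1..1} x * F x) (- y)) \<in> borel_measurable borel"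
    by (rule measurable_compose[OF _ meas]) measurable
  then have "set_integrable lborel {-1..1} G"
    by (intro set_integrable_by_neg_cos_substitution[where B=B])
       (use bound in \<open>simp_all add: G_def ind\<close>)
  then have "(LBINT y. G y * indicator {- cos 0..- cos pi} y)
           = (LBINT t. G (- cos t) * sin t * indicator {0..pi} t)"
    by (intro integral_substitution(2)) (auto intro!: derivative_eq_intros continuous_intros sin_ge_zero)
  moreover have "(LINT x:{-1..1}|lborel. F x) = (LBINT y. G y * indicator {-1..1} y)"
  proof -
    have "(LINT x:{-1..1}|lborel. F x) = (LBINT x. indicator {-1..1} x * F x)"
      by (simp add: set_lebesgue_integral_def)
    also have "\<dots> = \<bar>-1::real\<bar> *\<^sub>R (LBINT x. indicator {-1..1} (0 + -1 * x) * F (0 + -1 * x))"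
      by (rule lborel_integral_real_affine) simp
    finally show ?thesis
      by (simp add: G_def ind mult.commute)
  qed
  ultimately show ?thesis
    by (simp add: G_def)
qed

lemma jacobi_weight_cos:
  assumes t: "0 < t" "t < pi" and a: "a = 1/2 \<or> a = -1/2"
  shows "(1 - cos t) powr a * (1 + cos t) powr (-1/2) * sin t = jacobi_weight a t"
proof -
  have c: "cos t < 1" "-1 < cos t"
    using cos_monotone_0_pi[of 0 t] cos_monotone_0_pi[of t pi] t by auto
  have "sin t = sqrt (1 - (cos t)\<^sup>2)"
    using sin_cos_sqrt[of t] sin_ge_zero[of t] t by simp
  also have "1 - (cos t)\<^sup>2 = (1 - cos t) * (1 + cos t)"
    by (simp add: algebra_simps power2_eq_square)
  finally have s: "sin t = sqrt (1 - cos t) * sqrt (1 + cos t)"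
    by (simp add: real_sqrt_mult)
  have p: "(1 + cos t) powr (-1/2) = inverse (sqrt (1 + cos t))"
    using c by (simp add: powr_minus powr_half_sqrt[symmetric])
  have q: "sqrt (1 + cos t) > 0" "sqrt (1 - cos t) > 0"
    using c by auto
  show ?thesis
  proof (cases "a = 1/2")
    case True
    have "(1 - cos t) powr (1/2) = sqrt (1 - cos t)"
      using c by (simp add: powr_half_sqrt)
    then show ?thesis
      using q c unfolding True p s jacobi_weight_def
      by (simp add: field_simps real_sqrt_mult_self)
  next
    case False
    with a have "(1 - cos t) powr a = inverse (sqrt (1 - cos t))"
      using c by (simp add: powr_minus powr_half_sqrt[symmetric])
    then show ?thesis
      using False q unfolding p s jacobi_weight_def by (simp add: field_simps)
  qed
qed

definition f_integrand :: "(nat \<Rightarrow> real) \<Rightarrow> (nat \<Rightarrow> real) \<Rightarrow> real \<Rightarrow> nat \<Rightarrow> real \<Rightarrow> nat \<Rightarrow> real \<Rightarrow> real" where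
  "f_integrand \<alpha> \<beta> \<delta> n a k x = x ^ n * E_omega \<alpha> \<beta> \<delta> x * Jac a k x * (1 - x) powr a * (1 + x) powr (-1/2)"

definition test_fn :: "real \<Rightarrow> nat \<Rightarrow> real \<Rightarrow> real" where
  "test_fn a k t = indicator {0..pi} t * jacobi_trig a k t * jacobi_weight a t"

lemma borel_measurable_test_fn [measurable]: "test_fn a k \<in> borel_measurable borel"
  unfolding test_fn_def by measurable

lemma f_fun_eq: "f_fun \<alpha> \<beta> \<delta> N a j k = Wt a k / pi * (LINT x:{-1..1}|lborel. f_integrand \<alpha> \<beta> \<delta> (N - j) a k x)"
  unfolding f_fun_def f_integrand_def ..

lemma borel_measurable_indicator_f_integrand:
  assumes "in_Omega \<alpha> \<beta> \<delta>"
  shows "(\<lambda>x. indicator {-1..1} x * f_integrand \<alpha> \<beta> \<delta> n a k x) \<in> borel_measurable borel"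
proof -
  have "(\<lambda>x. indicator {-1..1} x *\<^sub>R Jac a k x) \<in> borel_measurable borel"
    by (rule borel_measurable_continuous_on_indicator[OF _ continuous_on_Jac]) simp
  with borel_measurable_indicator_E_omega[OF assms]
  have "(\<lambda>x. (indicator {-1..1} x * E_omega \<alpha> \<beta> \<delta> x) * (indicator {-1..1} x *\<^sub>R Jac a k x)
              * x ^ n * (1 - x) powr a * (1 + x) powr (-1/2)) \<in> borel_measurable borel"
    by measurable
  also have "(\<lambda>x. (indicator {-1..1} x * E_omega \<alpha> \<beta> \<delta> x) * (indicator {-1..1} x *\<^sub>R Jac a k x)
              * x ^ n * (1 - x) powr a * (1 + x) powr (-1/2))
           = (\<lambda>x. indicator {-1..1} x * f_integrand \<alpha> \<beta> \<delta> n a k x)"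
    by (auto simp: f_integrand_def indicator_def fun_eq_iff)
  finally show ?thesis .
qed

lemma f_integrand_cos_mult_sin:
  assumes "0 < t" "t < pi" "a = 1/2 \<or> a = -1/2"
  shows "f_integrand \<alpha> \<beta> \<delta> n a k (cos t) * sin t
       = cos t ^ n * E_omega \<alpha> \<beta> \<delta> (cos t) * (jacobi_trig a k t * jacobi_weight a t)"
  using jacobi_weight_cos[OF assms] unfolding f_integrand_def jacobi_trig_def by (simp add: algebra_simps)

lemma abs_trig_moment_le:
  assumes "\<bar>E_omega \<alpha> \<beta> \<delta> (cos t)\<bar> \<le> B"
  shows "\<bar>cos t ^ n * E_omega \<alpha> \<beta> \<delta> (cos t) * (jacobi_trig a k t * jacobi_weight a t)\<bar> \<le> 2 * B"
proof -
  have "\<bar>cos t ^ n\<bar> \<le> 1"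
    by (simp add: power_abs power_le_one)
  then have "\<bar>cos t ^ n\<bar> * \<bar>E_omega \<alpha> \<beta> \<delta> (cos t)\<bar> * \<bar>jacobi_trig a k t * jacobi_weight a t\<bar> \<le> 1 * B * 2"
    using assms by (intro mult_mono abs_jacobi_trig_mult_weight_le) auto
  then show ?thesis
    by (simp add: abs_mult)
qed

lemma
  assumes \<Omega>: "in_Omega \<alpha> \<beta> \<delta>" and a: "a = 1/2 \<or> a = -1/2"
  shows integrable_trig_moment:
      "integrable lborel (\<lambda>t. cos t ^ n * E_omega \<alpha> \<beta> \<delta> (cos t) * test_fn a k t)"
    and integral_trig_moment:
      "(LBINT t. cos t ^ (N - j) * E_omega \<alpha> \<beta> \<delta> (cos t) * test_fn a k t)
         = jacobi_norm a k * f_fun \<alpha> \<beta> \<delta> N a j k"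
proof -
  obtain B where B: "\<And>t. \<bar>E_omega \<alpha> \<beta> \<delta> (cos t)\<bar> \<le> B"
    using E_omega_bounded[OF \<Omega>] by (metis cos_ge_minus_one cos_le_one)
  have reorder: "cos t ^ n * E_omega \<alpha> \<beta> \<delta> (cos t) * test_fn a k t
      = indicator {0..pi} t * (cos t ^ n * E_omega \<alpha> \<beta> \<delta> (cos t) * (jacobi_trig a k t * jacobi_weight a t))"
    for n t by (simp add: test_fn_def)
  show "integrable lborel (\<lambda>t. cos t ^ n * E_omega \<alpha> \<beta> \<delta> (cos t) * test_fn a k t)"
    unfolding reorder
    by (rule integrable_bounded_on_0_pi[OF _ abs_trig_moment_le[OF B]])
       (use borel_measurable_E_omega_cos[OF \<Omega>] in measurable)
  have bound: "\<bar>f_integrand \<alpha> \<beta> \<delta> (N - j) a k (cos t) * sin t\<bar> \<le> 2 * B" if "t \<in> {0..pi}" for t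
  proof (cases "t = 0 \<or> t = pi")
    case True
    then show ?thesis using B[of 0] by auto
  next
    case False
    with that show ?thesis
      by (simp add: f_integrand_cos_mult_sin[OF _ _ a] abs_trig_moment_le[OF B])
  qed
  have "(LINT x:{-1..1}|lborel. f_integrand \<alpha> \<beta> \<delta> (N - j) a k x)
      = (LBINT t. f_integrand \<alpha> \<beta> \<delta> (N - j) a k (cos t) * sin t * indicator {0..pi} t)"
    by (rule set_integral_cos_substitution[OF borel_measurable_indicator_f_integrand[OF \<Omega>] bound])
  also have "\<dots> = (LBINT t. cos t ^ (N - j) * E_omega \<alpha> \<beta> \<delta> (cos t) * test_fn a k t)"
  proof (rule integral_cong_AE)
    show "AE t in lborel. f_integrand \<alpha> \<beta> \<delta> (N - j) a k (cos t) * sin t * indicator {0..pi} t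
                        = cos t ^ (N - j) * E_omega \<alpha> \<beta> \<delta> (cos t) * test_fn a k t"
      using AE_lborel_singleton[of 0] AE_lborel_singleton[of pi]
      by eventually_elim (auto simp: reorder indicator_def f_integrand_cos_mult_sin[OF _ _ a])
    have "(\<lambda>t. (\<lambda>x. indicator {-1..1} x * f_integrand \<alpha> \<beta> \<delta> (N - j) a k x) (cos t))
            \<in> borel_measurable borel"
      by (rule measurable_compose[OF _ borel_measurable_indicator_f_integrand[OF \<Omega>]]) measurable
    then show "(\<lambda>t. f_integrand \<alpha> \<beta> \<delta> (N - j) a k (cos t) * sin t * indicator {0..pi} t)
                 \<in> borel_measurable lborel"
      by simp
    show "(\<lambda>t. cos t ^ (N - j) * E_omega \<alpha> \<beta> \<delta> (cos t) * test_fn a k t) \<in> borel_measurable lborel"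
      using borel_measurable_E_omega_cos[OF \<Omega>] by measurable
  qed
  finally show "(LBINT t. cos t ^ (N - j) * E_omega \<alpha> \<beta> \<delta> (cos t) * test_fn a k t)
      = jacobi_norm a k * f_fun \<alpha> \<beta> \<delta> N a j k"
    using Wt_pos[of a k] by (simp add: f_fun_eq jacobi_norm_def)
qed

section \<open>Determinants\<close>

lemma det_mat_col_expansion:
  "Determinant.det (Matrix.mat N N (\<lambda>(i, j). X i j))
     = (\<Sum>p | p permutes {0..<N}. signof p * (\<Prod>j<N. X (p j) j))"
  by (subst det_col[of _ N]) auto

lemma det_mat_transpose:
  "Determinant.det (Matrix.mat N N (\<lambda>(i, j). X j i)) = Determinant.det (Matrix.mat N N (\<lambda>(i, j). X i j))"
proof -
  have "transpose_mat (Matrix.mat N N (\<lambda>(i, j). X i j)) = Matrix.mat N N (\<lambda>(i, j). X j i)"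
    by (rule eq_matI) auto
  then show ?thesis
    using det_transpose[of "Matrix.mat N N (\<lambda>(i, j). X i j)" N] by simp
qed

lemma det_mat_scale:
  "Determinant.det (Matrix.mat N N (\<lambda>(i, j). r i * s j * X i j))
     = (\<Prod>i<N. r i) * (\<Prod>j<N. s j) * Determinant.det (Matrix.mat N N (\<lambda>(i, j). X i j))"
proof -
  have "signof p * (\<Prod>j<N. r (p j) * s j * X (p j) j)
      = (\<Prod>i<N. r i) * (\<Prod>j<N. s j) * (signof p * (\<Prod>j<N. X (p j) j))"
    if "p permutes {0..<N}" for p
  proof -
    have "(\<Prod>j<N. r (p j)) = (\<Prod>i<N. r i)"
      using prod.permute[OF that, of r] by (simp add: atLeast0LessThan comp_def)
    then show ?thesis
      by (simp add: prod.distrib)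
  qed
  then show ?thesis
    by (simp add: det_mat_col_expansion sum_distrib_left)
qed

lemma det_vandermonde_nonzero:
  fixes x :: "nat \<Rightarrow> real"
  assumes inj: "inj_on x {..<N}"
  shows "Determinant.det (Matrix.mat N N (\<lambda>(i, j). x j ^ (N - 1 - i))) \<noteq> 0"
proof
  define M where "M = Matrix.mat N N (\<lambda>(i, j). x j ^ (N - 1 - i))"
  assume "Determinant.det (Matrix.mat N N (\<lambda>(i, j). x j ^ (N - 1 - i))) = 0"
  then have "Determinant.det (transpose_mat M) = 0"
    unfolding M_def by (subst det_transpose[of _ N]) auto
  then obtain v where v: "v \<in> carrier_vec N" "v \<noteq> 0\<^sub>v N" "transpose_mat M *\<^sub>v v = 0\<^sub>v N"
    using det_0_iff_vec_prod_zero[of "transpose_mat M" N] unfolding M_def by auto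
  \<comment> \<open>\<open>v\<close> is the coefficient vector of a polynomial of degree \<open>< N\<close> with the \<open>N\<close> roots \<open>x j\<close>.\<close>
  define P where "P = (\<Sum>j<N. monom (vec_index v j) (N - 1 - j))"
  have root: "poly P (x i) = 0" if "i < N" for i
  proof -
    have "vec_index (transpose_mat M *\<^sub>v v) i = (\<Sum>j<N. x i ^ (N - 1 - j) * vec_index v j)"
      using that v(1) unfolding M_def by (simp add: scalar_prod_def atLeast0LessThan)
    then show ?thesis
      using v(3) that by (simp add: P_def poly_sum poly_monom mult.commute)
  qed
  have "N > 0"
  proof (rule ccontr)
    assume "\<not> N > 0"
    then have "v = 0\<^sub>v N"
      using v(1) by auto
    with v(2) show False by simp
  qed
  have "P = 0"
  proof (rule ccontr)
    assume nz: "P \<noteq> 0"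
    have "Polynomial.degree P \<le> N - 1"
      unfolding P_def by (rule degree_sum_le) (auto intro: order_trans[OF degree_monom_le])
    moreover have "card (x ` {..<N}) \<le> card {y. poly P y = 0}"
      using root by (intro card_mono poly_roots_finite nz) auto
    moreover have "card {y. poly P y = 0} \<le> Polynomial.degree P"
      by (rule card_poly_roots_bound[OF nz])
    ultimately show False
      using card_image[OF inj] \<open>N > 0\<close> by simp
  qed
  have "vec_index v j = 0" if j: "j < N" for j
  proof -
    have "Polynomial.coeff P (N - 1 - j) = (\<Sum>i<N. (if N - 1 - i = N - 1 - j then vec_index v i else 0))"
      unfolding P_def by (simp add: coeff_sum coeff_monom)
    also have "\<dots> = (\<Sum>i\<in>{j}. vec_index v i)"
      by (rule sum.mono_neutral_cong_right) (use j in auto)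
    finally show ?thesis
      using \<open>P = 0\<close> by simp
  qed
  then have "v = 0\<^sub>v N"
    using v(1) by (intro eq_vecI) auto
  with v(2) show False by simp
qed

lemma
  fixes A h :: "nat \<Rightarrow> real \<Rightarrow> real"
  assumes int: "\<And>i j. integrable lborel (\<lambda>t. A i t * h j t)"
  shows integrable_det_mult_prod:
      "integrable (Pi\<^sub>M {..<N} (\<lambda>_. lborel))
         (\<lambda>\<theta>. Determinant.det (Matrix.mat N N (\<lambda>(i, j). A i (\<theta> j))) * (\<Prod>j<N. h j (\<theta> j)))"
    and integral_det_mult_prod:
      "integral\<^sup>L (Pi\<^sub>M {..<N} (\<lambda>_. lborel))
         (\<lambda>\<theta>. Determinant.det (Matrix.mat N N (\<lambda>(i, j). A i (\<theta> j))) * (\<Prod>j<N. h j (\<theta> j)))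
       = Determinant.det (Matrix.mat N N (\<lambda>(i, j). integral\<^sup>L lborel (\<lambda>t. A i t * h j t)))"
proof -
  interpret product_sigma_finite "\<lambda>_::nat. lborel :: real measure"
    by (simp add: product_sigma_finite_def lborel.sigma_finite_measure_axioms)
  have expand: "(\<lambda>\<theta>. Determinant.det (Matrix.mat N N (\<lambda>(i, j). A i (\<theta> j))) * (\<Prod>j<N. h j (\<theta> j)))
      = (\<lambda>\<theta>. \<Sum>p | p permutes {0..<N}. signof p * (\<Prod>j<N. A (p j) (\<theta> j) * h j (\<theta> j)))"
    by (simp add: det_mat_col_expansion sum_distrib_right prod.distrib mult.assoc)
  have summand: "integrable (Pi\<^sub>M {..<N} (\<lambda>_. lborel)) (\<lambda>\<theta>. \<Prod>j<N. A (p j) (\<theta> j) * h j (\<theta> j))" for p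
    by (rule product_integrable_prod) (auto intro: int)
  show "integrable (Pi\<^sub>M {..<N} (\<lambda>_. lborel))
         (\<lambda>\<theta>. Determinant.det (Matrix.mat N N (\<lambda>(i, j). A i (\<theta> j))) * (\<Prod>j<N. h j (\<theta> j)))"
    unfolding expand by (intro Bochner_Integration.integrable_sum Bochner_Integration.integrable_mult_right summand)
  have "integral\<^sup>L (Pi\<^sub>M {..<N} (\<lambda>_. lborel))
          (\<lambda>\<theta>. \<Sum>p | p permutes {0..<N}. signof p * (\<Prod>j<N. A (p j) (\<theta> j) * h j (\<theta> j)))
      = (\<Sum>p | p permutes {0..<N}. signof p * (\<Prod>j<N. integral\<^sup>L lborel (\<lambda>t. A (p j) t * h j t)))"
    by (subst Bochner_Integration.integral_sum)
       (auto intro!: Bochner_Integration.integrable_mult_right summand sum.cong arg_cong2[where f="(*)"]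
             product_integral_prod int simp: Bochner_Integration.integral_mult_right_zero)
  then show "integral\<^sup>L (Pi\<^sub>M {..<N} (\<lambda>_. lborel))
         (\<lambda>\<theta>. Determinant.det (Matrix.mat N N (\<lambda>(i, j). A i (\<theta> j))) * (\<Prod>j<N. h j (\<theta> j)))
       = Determinant.det (Matrix.mat N N (\<lambda>(i, j). integral\<^sup>L lborel (\<lambda>t. A i t * h j t)))"
    unfolding expand by (simp add: det_mat_col_expansion)
qed

section \<open>Signatures\<close>

definition shifted :: "nat \<Rightarrow> nat list \<Rightarrow> nat \<Rightarrow> nat" where
  "shifted N lam i = lam ! i + (N - 1 - i)"

lemma JN_nth_antimono: "lam \<in> JN N \<Longrightarrow> i \<le> j \<Longrightarrow> j < N \<Longrightarrow> lam ! j \<le> lam ! i"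
  unfolding JN_def using sorted_wrt_nth_less[of "(\<ge>)" lam i j] by (cases "i = j") auto

lemma shifted_strict_antimono: "lam \<in> JN N \<Longrightarrow> i < j \<Longrightarrow> j < N \<Longrightarrow> shifted N lam j < shifted N lam i"
  unfolding shifted_def using JN_nth_antimono[of lam N i j] by linarith

lemma permutes_strict_mono_on_eq_id:
  fixes q :: "nat \<Rightarrow> nat"
  assumes q: "q permutes {0..<N}" and mono: "\<And>i j. i < j \<Longrightarrow> j < N \<Longrightarrow> q i < q j"
  shows "q = id"
proof -
  have ge: "i \<le> q i" if "i < N" for i
    using that by (induction i) (use mono in \<open>auto simp: Suc_le_eq intro: le_less_trans\<close>)
  have up: "q i + d \<le> q (i + d)" if "i + d < N" for i d
    using that by (induction d) (use mono in \<open>auto intro: Suc_leI le_less_trans\<close>)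
  have "q i = i" if i: "i < N" for i
  proof -
    have "q i + (N - 1 - i) \<le> q (i + (N - 1 - i))"
      using up[of i "N - 1 - i"] i by simp
    moreover have "q (i + (N - 1 - i)) < N"
      using permutes_in_image[OF q, of "i + (N - 1 - i)"] i by simp
    ultimately show ?thesis
      using ge[OF i] i by linarith
  qed
  with permutes_not_in[OF q] show ?thesis
    by (metis atLeastLessThan_iff eq_id_iff zero_le)
qed

lemma shifted_permute_eq_imp:
  assumes lam: "lam \<in> JN N" and kap: "kap \<in> JN N" and p: "p permutes {0..<N}"
    and eq: "\<And>j. j < N \<Longrightarrow> shifted N lam (p j) = shifted N kap j"
  shows "p = id \<and> lam = kap"
proof -
  have mono: "p i < p j" if ij: "i < j" "j < N" for i j
  proof (rule ccontr)
    assume "\<not> p i < p j"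
    moreover have "p i < N"
      using permutes_in_image[OF p, of i] ij by simp
    ultimately have "shifted N lam (p i) \<le> shifted N lam (p j)"
      using shifted_strict_antimono[OF lam, of "p j" "p i"] by (cases "p i = p j") auto
    with eq ij have "shifted N kap i \<le> shifted N kap j"
      by simp
    with shifted_strict_antimono[OF kap ij] show False
      by simp
  qed
  have "p = id"
    by (rule permutes_strict_mono_on_eq_id[OF p mono])
  moreover have "lam = kap"
  proof (rule nth_equalityI)
    show "length lam = length kap"
      using lam kap unfolding JN_def by simp
    fix j assume "j < length lam"
    then have "j < N"
      using lam unfolding JN_def by simp
    then have "shifted N lam j = shifted N kap j"
      using eq \<open>p = id\<close> by simp
    then show "lam ! j = kap ! j"
      unfolding shifted_def by linarith
  qed
  ultimately show ?thesis ..
qed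

lemma det_shifted_delta:
  assumes lam: "lam \<in> JN N" and kap: "kap \<in> JN N"
  shows "Determinant.det (Matrix.mat N N (\<lambda>(i, j). if shifted N lam i = shifted N kap j then c j else 0))
       = (if lam = kap then \<Prod>j<N. c j else 0)"
proof -
  have "signof p * (\<Prod>j<N. if shifted N lam (p j) = shifted N kap j then c j else 0)
      = (if p = id \<and> lam = kap then \<Prod>j<N. c j else 0)" if p: "p permutes {0..<N}" for p
  proof (cases "\<forall>j<N. shifted N lam (p j) = shifted N kap j")
    case True
    then show ?thesis
      using shifted_permute_eq_imp[OF lam kap p] by simp
  next
    case False
    then obtain j where j: "j < N" "shifted N lam (p j) \<noteq> shifted N kap j"
      by auto
    then have "(\<Prod>j<N. if shifted N lam (p j) = shifted N kap j then c j else 0) = 0"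
      by (intro prod_zero) auto
    moreover have "\<not> (p = id \<and> lam = kap)"
      using j by auto
    ultimately show ?thesis
      by (simp only: if_False mult_zero_right)
  qed
  then have "Determinant.det (Matrix.mat N N (\<lambda>(i, j). if shifted N lam i = shifted N kap j then c j else 0))
      = (\<Sum>p | p permutes {0..<N}. if p = id \<and> lam = kap then \<Prod>j<N. c j else 0)"
    by (simp add: det_mat_col_expansion)
  also have "\<dots> = (if lam = kap then \<Prod>j<N. c j else 0)"
    by (cases "lam = kap") (simp_all add: sum.delta permutes_id finite_permutations)
  finally show ?thesis .
qed

lemma ratio_of_squares_ge_1:
  fixes li lj mi mj :: real
  assumes "0 < mi - mj" "0 < mi + mj" "mi - mj \<le> li - lj" "mi + mj \<le> li + lj"
  shows "1 \<le> (li\<^sup>2 - lj\<^sup>2) / (mi\<^sup>2 - mj\<^sup>2)"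
proof -
  have "(mi - mj) * (mi + mj) \<le> (li - lj) * (li + lj)"
    using assms by (intro mult_mono) auto
  moreover have "0 < (mi - mj) * (mi + mj)"
    using assms by simp
  ultimately show ?thesis
    by (simp add: power2_eq_square algebra_simps)
qed

lemma dimB_ge_1:
  assumes lam: "lam \<in> JN N"
  shows "1 \<le> dimB N lam"
proof -
  define l m where "l = (\<lambda>i. real (lam ! i) + real N - real i - 1/2)" and "m = (\<lambda>i. real N - real i - 1/2)"
  have "1 \<le> (\<Prod>i<N. \<Prod>j\<in>{i<..<N}. ((l i)\<^sup>2 - (l j)\<^sup>2) / ((m i)\<^sup>2 - (m j)\<^sup>2))"
    using JN_nth_antimono[OF lam] unfolding l_def m_def
    by (intro prod_ge_1 ballI ratio_of_squares_ge_1) auto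
  moreover have "1 \<le> (\<Prod>i<N. l i / m i)"
    unfolding l_def m_def by (intro prod_ge_1) auto
  ultimately show ?thesis
    unfolding dimB_def l_def[symmetric] m_def[symmetric] Let_def
    using mult_mono[of 1 _ 1] by fastforce
qed

lemma dimD_ge_1:
  assumes lam: "lam \<in> JN N"
  shows "1 \<le> dimD N lam"
  unfolding dimD_def Let_def using JN_nth_antimono[OF lam]
  by (intro prod_ge_1 ballI ratio_of_squares_ge_1) auto

section \<open>Exchanging an infinite sum with an integral\<close>

definition nat_extension :: "'i set \<Rightarrow> ('i::countable \<Rightarrow> 'a::zero) \<Rightarrow> nat \<Rightarrow> 'a" where
  "nat_extension A \<phi> n = (if n \<in> to_nat ` A then \<phi> (from_nat n) else 0)"

lemma has_sum_nat_extension_iff: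
  "(nat_extension A \<phi> has_sum s) UNIV \<longleftrightarrow> (\<phi> has_sum s) A"
proof -
  have "(nat_extension A \<phi> has_sum s) UNIV \<longleftrightarrow> (nat_extension A \<phi> has_sum s) (to_nat ` A)"
    by (rule has_sum_cong_neutral) (auto simp: nat_extension_def)
  also have "\<dots> \<longleftrightarrow> ((nat_extension A \<phi> \<circ> to_nat) has_sum s) A"
    by (rule has_sum_reindex) simp
  also have "\<dots> \<longleftrightarrow> (\<phi> has_sum s) A"
    by (rule has_sum_cong) (simp add: nat_extension_def)
  finally show ?thesis .
qed

lemma has_sum_integral_dominated:
  fixes f :: "'i::countable \<Rightarrow> 'x \<Rightarrow> real"
  assumes sum: "\<And>x. ((\<lambda>l. f l x) has_sum S x) A"
    and int: "\<And>l. l \<in> A \<Longrightarrow> integrable M (f l)"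
    and bound: "\<And>l x. l \<in> A \<Longrightarrow> x \<in> space M \<Longrightarrow> \<bar>f l x\<bar> \<le> c l * G x"
    and G: "integrable M G"
    and c: "c summable_on A" "\<And>l. l \<in> A \<Longrightarrow> 0 \<le> c l"
  shows "((\<lambda>l. integral\<^sup>L M (f l)) has_sum integral\<^sup>L M S) A"
proof -
  define F where "F n x = nat_extension A (\<lambda>l. f l x) n" for n x
  define C where "C = nat_extension A c"
  have in_A: "from_nat n \<in> A" if "n \<in> to_nat ` A" for n
    using that by auto
  have F_sums: "(\<lambda>n. F n x) sums S x" for x
    using sum[of x] unfolding F_def by (intro has_sum_imp_sums) (simp add: has_sum_nat_extension_iff)
  have C_nonneg: "0 \<le> C n" for n
    using c(2) in_A by (simp add: C_def nat_extension_def)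
  from c(1) obtain s where "(c has_sum s) A"
    by (auto simp: summable_on_def)
  then have "C summable_on UNIV"
    unfolding C_def summable_on_def has_sum_nat_extension_iff by blast
  then have C_summable: "summable C"
    using summable_on_UNIV_nonneg_real_iff C_nonneg by blast
  have F_int: "integrable M (F n)" for n
    by (cases "n \<in> to_nat ` A") (use int in_A in \<open>simp_all add: F_def[abs_def] nat_extension_def\<close>)
  have F_bound: "\<bar>F n x\<bar> \<le> C n * G x" if "x \<in> space M" for n x
    using bound[OF in_A that] by (simp add: F_def C_def nat_extension_def)
  have norm_int_le: "integral\<^sup>L M (\<lambda>x. norm (F n x)) \<le> C n * integral\<^sup>L M G" for n
  proof -
    have "integral\<^sup>L M (\<lambda>x. norm (F n x)) \<le> integral\<^sup>L M (\<lambda>x. C n * G x)"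
      by (rule integral_mono) (use F_int G F_bound in auto)
    then show ?thesis by simp
  qed
  have norm_int_summable: "summable (\<lambda>n. integral\<^sup>L M (\<lambda>x. norm (F n x)))"
    by (rule summable_comparison_test[OF _ summable_mult2[OF C_summable]])
       (use norm_int_le in \<open>auto intro!: integral_nonneg_AE\<close>)
  have "(\<lambda>n. integral\<^sup>L M (F n)) sums integral\<^sup>L M (\<lambda>x. \<Sum>n. F n x)"
  proof (rule sums_integral[OF F_int _ norm_int_summable])
    show "AE x in M. summable (\<lambda>n. norm (F n x))"
      by (intro AE_I2 summable_comparison_test[OF _ summable_mult2[OF C_summable]]) (use F_bound in auto)
  qed
  also have "(\<lambda>x. \<Sum>n. F n x) = S"
    using F_sums by (auto simp: sums_iff fun_eq_iff)
  finally have "((\<lambda>n. integral\<^sup>L M (F n)) has_sum integral\<^sup>L M S) UNIV"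
    by (intro norm_summable_imp_has_sum summable_comparison_test[OF _ norm_int_summable])
       (auto intro: integral_norm_bound)
  moreover have "integral\<^sup>L M (F n) = nat_extension A (\<lambda>l. integral\<^sup>L M (f l)) n" for n
    by (simp add: F_def[abs_def] nat_extension_def)
  ultimately show ?thesis
    by (simp add: has_sum_nat_extension_iff)
qed

section \<open>Integrating the character expansion\<close>

text \<open>Both \<open>chiB\<close> and \<open>XD\<close> are \<open>char_num / char_denom\<close>, with \<open>char_scale\<close> absorbing the factor 2
  in \<open>XD\<close>; \<open>dim_denom\<close> is the denominator in the expansion defining \<open>is_P_omega\<close>.\<close>

definition char_scale :: "real \<Rightarrow> real" where
  "char_scale a = (if a = 1/2 then 1 else 2)"

definition dim_denom :: "real \<Rightarrow> nat \<Rightarrow> nat list \<Rightarrow> real" where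
  "dim_denom a N lam = (if a = 1/2 then dimB N lam else 2 * dimD N lam)"

definition char_num :: "real \<Rightarrow> nat \<Rightarrow> nat list \<Rightarrow> (nat \<Rightarrow> real) \<Rightarrow> real" where
  "char_num a N lam \<theta> =
     Determinant.det (Matrix.mat N N (\<lambda>(i, j). char_scale a * jacobi_trig a (shifted N lam i) (\<theta> j)))"

lemma dim_denom_ge_1: "lam \<in> JN N \<Longrightarrow> 1 \<le> dim_denom a N lam"
  unfolding dim_denom_def using dimB_ge_1 dimD_ge_1 by force

lemma det_mat_equal_columns:
  assumes "i < N" "j < N" "i \<noteq> j" "x i = x j"
  shows "Determinant.det (Matrix.mat N N (\<lambda>(r, c). g r (x c))) = 0"
  by (rule det_identical_columns[of _ N i j]) (use assms in auto)

text \<open>At points where \<open>char_denom\<close> vanishes both sides of the expansion are zero, so after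
  multiplying by \<open>char_denom\<close> the expansion holds everywhere.\<close>

lemma P_omega_expansion:
  assumes P: "is_P_omega \<alpha> \<beta> \<delta> N a P" and a: "a = 1/2 \<or> a = -1/2"
  shows "((\<lambda>lam. P lam * char_num a N lam \<theta> / dim_denom a N lam) has_sum
           (char_denom N \<theta> * (\<Prod>j<N. E_omega \<alpha> \<beta> \<delta> (cos (\<theta> j))))) (JN N)"
proof (cases "inj_on (\<lambda>j. cos (\<theta> j)) {..<N}")
  case True
  have "inj_on (\<lambda>j. 2 * cos (\<theta> j)) {..<N}"
    using True by (auto simp: inj_on_def)
  then have D: "char_denom N \<theta> \<noteq> 0"
    unfolding char_denom_def by (rule det_vandermonde_nonzero)
  have "((\<lambda>lam. char_denom N \<theta> * (P lam * char_num a N lam \<theta> / char_denom N \<theta> / dim_denom a N lam))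
          has_sum (char_denom N \<theta> * (\<Prod>j<N. E_omega \<alpha> \<beta> \<delta> (cos (\<theta> j))))) (JN N)"
    using P True a
    by (intro has_sum_cmult_right)
       (auto simp: is_P_omega_def chiB_def XD_def char_num_def char_scale_def dim_denom_def
          jacobi_trig_def Jac_def shifted_def)
  then show ?thesis
    using D by simp
next
  case False
  then obtain i j where ij: "i < N" "j < N" "i \<noteq> j" "cos (\<theta> i) = cos (\<theta> j)"
    unfolding inj_on_def by auto
  have "char_denom N \<theta> = 0"
    unfolding char_denom_def
    using det_mat_equal_columns[OF ij(1-3), of "\<lambda>c. cos (\<theta> c)" "\<lambda>r x. (2 * x) ^ (N - 1 - r)"] ij(4)
    by simp
  moreover have "char_num a N lam \<theta> = 0" for lam
    unfolding char_num_def jacobi_trig_def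
    using det_mat_equal_columns[OF ij(1-3), of "\<lambda>c. cos (\<theta> c)" "\<lambda>r x. char_scale a * Jac a (shifted N lam r) x"] ij(4)
    by simp
  ultimately show ?thesis
    by simp
qed

lemma abs_jacobi_trig_mult_jacobi_trig_weight_le:
  "\<bar>jacobi_trig a l t * jacobi_trig a k t * jacobi_weight a t\<bar> \<le> (2 * real k + 1) * 2"
proof -
  have "\<bar>jacobi_trig a k t\<bar> * \<bar>jacobi_trig a l t * jacobi_weight a t\<bar> \<le> (2 * real k + 1) * 2"
    by (intro mult_mono abs_jacobi_trig_le abs_jacobi_trig_mult_weight_le) auto
  then show ?thesis
    by (simp add: abs_mult mult_ac)
qed

lemma abs_jacobi_trig_mult_test_fn_le:
  "\<bar>jacobi_trig a l t * test_fn a k t\<bar> \<le> indicator {0..pi} t * ((2 * real k + 1) * 2)"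
  using abs_jacobi_trig_mult_jacobi_trig_weight_le[of a l t k]
  by (simp add: test_fn_def indicator_def mult_ac)

lemma
  assumes a: "a = 1/2 \<or> a = -1/2"
  shows integrable_jacobi_trig_mult_test_fn:
      "integrable lborel (\<lambda>t. c * jacobi_trig a l t * test_fn a k t)"
    and integral_jacobi_trig_mult_test_fn:
      "(LBINT t. c * jacobi_trig a l t * test_fn a k t) = c * (if l = k then jacobi_norm a k else 0)"
proof -
  have eq: "c * jacobi_trig a l t * test_fn a k t
      = c * (indicator {0..pi} t * (jacobi_trig a l t * jacobi_trig a k t * jacobi_weight a t))" for t
    by (simp add: test_fn_def mult_ac)
  have "integrable lborel (\<lambda>t. indicator {0..pi} t * (jacobi_trig a l t * jacobi_trig a k t * jacobi_weight a t))"
    by (rule integrable_bounded_on_0_pi[OF _ abs_jacobi_trig_mult_jacobi_trig_weight_le]) measurable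
  then show "integrable lborel (\<lambda>t. c * jacobi_trig a l t * test_fn a k t)"
    unfolding eq by simp
  show "(LBINT t. c * jacobi_trig a l t * test_fn a k t) = c * (if l = k then jacobi_norm a k else 0)"
    unfolding eq by (simp add: jacobi_orthogonality[OF a])
qed

lemma integrable_char_num_mult_test_fn:
  assumes a: "a = 1/2 \<or> a = -1/2"
  shows "integrable (Pi\<^sub>M {..<N} (\<lambda>_. lborel))
           (\<lambda>\<theta>. char_num a N l \<theta> * (\<Prod>j<N. test_fn a (k j) (\<theta> j)))"
proof -
  have "integrable lborel (\<lambda>t. char_scale a * jacobi_trig a (shifted N l i) t * test_fn a (k j) t)" for i j
    by (rule integrable_jacobi_trig_mult_test_fn[OF a])
  then show ?thesis
    unfolding char_num_def by (rule integrable_det_mult_prod)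
qed

lemma integral_char_num_mult_test_fn:
  assumes a: "a = 1/2 \<or> a = -1/2" and "l \<in> JN N" "lam \<in> JN N"
  shows "integral\<^sup>L (Pi\<^sub>M {..<N} (\<lambda>_. lborel))
           (\<lambda>\<theta>. char_num a N l \<theta> * (\<Prod>j<N. test_fn a (shifted N lam j) (\<theta> j)))
       = (if l = lam then \<Prod>j<N. char_scale a * jacobi_norm a (shifted N lam j) else 0)"
proof -
  let ?A = "\<lambda>i t. char_scale a * jacobi_trig a (shifted N l i) t"
  let ?h = "\<lambda>j. test_fn a (shifted N lam j)"
  have int: "integrable lborel (\<lambda>t. ?A i t * ?h j t)" for i j
    by (rule integrable_jacobi_trig_mult_test_fn[OF a])
  show ?thesis
    unfolding char_num_def integral_det_mult_prod[OF int] integral_jacobi_trig_mult_test_fn[OF a]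
    using assms(2,3) by (simp add: if_distrib[of "(*) (char_scale a)"] det_shifted_delta cong: if_cong)
qed

lemma abs_char_num_mult_test_fn_le:
  "\<bar>char_num a N l \<theta> * (\<Prod>j<N. test_fn a (k j) (\<theta> j))\<bar>
     \<le> fact N * (\<Prod>j<N. \<bar>char_scale a\<bar> * (indicator {0..pi} (\<theta> j) * ((2 * real (k j) + 1) * 2)))"
proof -
  let ?B = "\<lambda>j. \<bar>char_scale a\<bar> * (indicator {0..pi} (\<theta> j) * ((2 * real (k j) + 1) * 2))"
  have "char_num a N l \<theta> * (\<Prod>j<N. test_fn a (k j) (\<theta> j))
      = (\<Sum>p | p permutes {0..<N}. signof p *
           (\<Prod>j<N. char_scale a * jacobi_trig a (shifted N l (p j)) (\<theta> j) * test_fn a (k j) (\<theta> j)))"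
    by (simp add: char_num_def det_mat_col_expansion sum_distrib_right prod.distrib mult.assoc)
  also have "\<bar>\<dots>\<bar> \<le> (\<Sum>p | p permutes {0..<N}. \<Prod>j<N. ?B j)"
  proof (rule order_trans[OF sum_abs sum_mono])
    fix p
    have "\<bar>char_scale a * jacobi_trig a (shifted N l (p j)) (\<theta> j) * test_fn a (k j) (\<theta> j)\<bar> \<le> ?B j" for j
      using mult_left_mono[OF abs_jacobi_trig_mult_test_fn_le abs_ge_zero, of "char_scale a"]
      by (simp add: abs_mult mult.assoc)
    then show "\<bar>signof p * (\<Prod>j<N. char_scale a * jacobi_trig a (shifted N l (p j)) (\<theta> j) * test_fn a (k j) (\<theta> j))\<bar>
        \<le> (\<Prod>j<N. ?B j)"
      by (simp add: abs_mult abs_prod sign_def prod_mono)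
  qed
  also have "\<dots> = fact N * (\<Prod>j<N. ?B j)"
    using card_permutations[of "{0..<N}" N] by simp
  finally show ?thesis .
qed

lemma prod_two_power_triangular: "(\<Prod>i<N. (2::real) ^ (N - 1 - i)) = 2 powr (real N * (real N - 1) / 2)"
proof -
  have reindex: "(\<Sum>i<N. N - 1 - i) = (\<Sum>i<N. i)"
    using sum.nat_diff_reindex[of "\<lambda>i. i" N] by (simp add: Suc_diff_Suc)
  have gauss: "real (\<Sum>i<N. i) = real N * (real N - 1) / 2"
    by (induction N) (auto simp: field_simps)
  have "(\<Prod>i<N. (2::real) ^ (N - 1 - i)) = 2 ^ (\<Sum>i<N. N - 1 - i)"
    by (simp only: power_sum)
  also have "\<dots> = 2 powr real (\<Sum>i<N. i)"
    unfolding reindex by (rule powr_realpow[symmetric]) simp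
  finally show ?thesis
    by (simp only: gauss)
qed

lemma integral_char_denom_mult_test_fn:
  assumes \<Omega>: "in_Omega \<alpha> \<beta> \<delta>" and a: "a = 1/2 \<or> a = -1/2"
  shows "integral\<^sup>L (Pi\<^sub>M {..<N} (\<lambda>_. lborel)) (\<lambda>\<theta>. char_denom N \<theta> *
           (\<Prod>j<N. E_omega \<alpha> \<beta> \<delta> (cos (\<theta> j))) * (\<Prod>j<N. test_fn a (k j) (\<theta> j)))
       = 2 powr (real N * (real N - 1) / 2) * (\<Prod>j<N. jacobi_norm a (k j)) *
         Determinant.det (Matrix.mat N N (\<lambda>(i, j). f_fun \<alpha> \<beta> \<delta> N a (j + 1) (k i)))"
proof -
  let ?A = "\<lambda>i t. (2 * cos t) ^ (N - 1 - i)"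
  let ?h = "\<lambda>j t. E_omega \<alpha> \<beta> \<delta> (cos t) * test_fn a (k j) t"
  have entry: "?A i t * ?h j t = 2 ^ (N - Suc i) * (cos t ^ (N - Suc i) * E_omega \<alpha> \<beta> \<delta> (cos t) * test_fn a (k j) t)"
    for i j t by (simp add: power_mult_distrib mult_ac)
  have int: "integrable lborel (\<lambda>t. ?A i t * ?h j t)" for i j
    unfolding entry by (intro integrable_mult_right integrable_trig_moment[OF \<Omega> a])
  have entry_integral: "(LBINT t. ?A i t * ?h j t)
      = 2 ^ (N - 1 - i) * jacobi_norm a (k j) * f_fun \<alpha> \<beta> \<delta> N a (Suc i) (k j)" for i j
    using integral_trig_moment[OF \<Omega> a, of N "Suc i" "k j"] unfolding entry by simp
  have "integral\<^sup>L (Pi\<^sub>M {..<N} (\<lambda>_. lborel)) (\<lambda>\<theta>. char_denom N \<theta> *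
          (\<Prod>j<N. E_omega \<alpha> \<beta> \<delta> (cos (\<theta> j))) * (\<Prod>j<N. test_fn a (k j) (\<theta> j)))
      = integral\<^sup>L (Pi\<^sub>M {..<N} (\<lambda>_. lborel))
          (\<lambda>\<theta>. Determinant.det (Matrix.mat N N (\<lambda>(i, j). ?A i (\<theta> j))) * (\<Prod>j<N. ?h j (\<theta> j)))"
    by (simp add: char_denom_def prod.distrib mult.assoc)
  also have "\<dots> = Determinant.det (Matrix.mat N N (\<lambda>(i, j).
          2 ^ (N - 1 - i) * jacobi_norm a (k j) * f_fun \<alpha> \<beta> \<delta> N a (Suc i) (k j)))"
    unfolding integral_det_mult_prod[OF int] entry_integral ..
  also have "\<dots> = (\<Prod>i<N. (2::real) ^ (N - 1 - i)) * (\<Prod>j<N. jacobi_norm a (k j)) *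
      Determinant.det (Matrix.mat N N (\<lambda>(i, j). f_fun \<alpha> \<beta> \<delta> N a (j + 1) (k i)))"
    by (simp add: det_mat_scale det_mat_transpose[where X="\<lambda>i j. f_fun \<alpha> \<beta> \<delta> N a (Suc i) (k j)"])
  finally show ?thesis
    unfolding prod_two_power_triangular .
qed

lemma integrable_test_fn_majorant:
  "integrable (Pi\<^sub>M {..<N} (\<lambda>_. lborel))
     (\<lambda>\<theta>. fact N * (\<Prod>j<N. \<bar>c\<bar> * (indicator {0..pi} (\<theta> j) * ((2 * real (k j) + 1) * 2))))"
proof -
  interpret product_sigma_finite "\<lambda>_::nat. lborel :: real measure"
    by (simp add: product_sigma_finite_def lborel.sigma_finite_measure_axioms)
  have "integrable lborel (\<lambda>t. indicator {0..pi} t * (\<bar>c\<bar> * ((2 * real (k j) + 1) * 2)))" for j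
    by (rule integrable_bounded_on_0_pi) auto
  then have "integrable (Pi\<^sub>M {..<N} (\<lambda>_. lborel))
      (\<lambda>\<theta>. \<Prod>j<N. \<bar>c\<bar> * (indicator {0..pi} (\<theta> j) * ((2 * real (k j) + 1) * 2)))"
    by (intro product_integrable_prod) (auto simp: mult_ac)
  then show ?thesis
    by (rule integrable_mult_right)
qed

lemma summable_on_P_omega_div_dim_denom:
  assumes "is_P_omega \<alpha> \<beta> \<delta> N a P"
  shows "(\<lambda>l. P l / dim_denom a N l) summable_on JN N"
proof (rule summable_on_comparison_test)
  show "P summable_on JN N"
    using assms by (auto simp: is_P_omega_def summable_on_def)
  fix l assume l: "l \<in> JN N"
  then have "0 \<le> P l" "1 \<le> dim_denom a N l"
    using assms dim_denom_ge_1 by (auto simp: is_P_omega_def)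
  then show "P l / dim_denom a N l \<le> P l" "0 \<le> P l / dim_denom a N l"
    by (auto simp: divide_le_eq mult_le_cancel_left1)
qed

lemma has_sum_integral_P_omega_expansion:
  fixes k :: "nat \<Rightarrow> nat"
  assumes a: "a = 1/2 \<or> a = -1/2" and P: "is_P_omega \<alpha> \<beta> \<delta> N a P"
  defines "h \<equiv> \<lambda>\<theta>. \<Prod>j<N. test_fn a (k j) (\<theta> j)"
  shows "((\<lambda>l. integral\<^sup>L (Pi\<^sub>M {..<N} (\<lambda>_. lborel))
             (\<lambda>\<theta>. P l / dim_denom a N l * (char_num a N l \<theta> * h \<theta>)))
         has_sum integral\<^sup>L (Pi\<^sub>M {..<N} (\<lambda>_. lborel))
             (\<lambda>\<theta>. char_denom N \<theta> * (\<Prod>j<N. E_omega \<alpha> \<beta> \<delta> (cos (\<theta> j))) * h \<theta>)) (JN N)"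
proof (rule has_sum_integral_dominated)
  define G where "G \<theta> = fact N * (\<Prod>j<N. \<bar>char_scale a\<bar> * (indicator {0..pi} (\<theta> j) * ((2 * real (k j) + 1) * 2)))"
    for \<theta>
  have coeff_nonneg: "0 \<le> P l / dim_denom a N l" if "l \<in> JN N" for l
    using P that dim_denom_ge_1[OF that, of a] by (auto simp: is_P_omega_def)
  show "((\<lambda>l. P l / dim_denom a N l * (char_num a N l \<theta> * h \<theta>)) has_sum
          (char_denom N \<theta> * (\<Prod>j<N. E_omega \<alpha> \<beta> \<delta> (cos (\<theta> j))) * h \<theta>)) (JN N)" for \<theta>
    using has_sum_cmult_left[OF P_omega_expansion[OF P a], of \<theta> "h \<theta>"] by (simp add: mult_ac)
  show "integrable (Pi\<^sub>M {..<N} (\<lambda>_. lborel)) (\<lambda>\<theta>. P l / dim_denom a N l * (char_num a N l \<theta> * h \<theta>))"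
    for l unfolding h_def by (intro integrable_mult_right integrable_char_num_mult_test_fn[OF a])
  show "\<bar>P l / dim_denom a N l * (char_num a N l \<theta> * h \<theta>)\<bar> \<le> P l / dim_denom a N l * G \<theta>"
    if "l \<in> JN N" for l \<theta>
  proof -
    have "\<bar>char_num a N l \<theta> * h \<theta>\<bar> \<le> G \<theta>"
      unfolding h_def G_def by (rule abs_char_num_mult_test_fn_le)
    then have "P l / dim_denom a N l * \<bar>char_num a N l \<theta> * h \<theta>\<bar> \<le> P l / dim_denom a N l * G \<theta>"
      by (rule mult_left_mono[OF _ coeff_nonneg[OF that]])
    then show ?thesis
      by (simp only: abs_mult abs_of_nonneg[OF coeff_nonneg[OF that]])
  qed
  show "integrable (Pi\<^sub>M {..<N} (\<lambda>_. lborel)) G"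
    unfolding G_def by (rule integrable_test_fn_majorant)
  show "(\<lambda>l. P l / dim_denom a N l) summable_on JN N"
    by (rule summable_on_P_omega_div_dim_denom[OF P])
  show "0 \<le> P l / dim_denom a N l" if "l \<in> JN N" for l
    by (rule coeff_nonneg[OF that])
qed

lemma P_omega_det_identity:
  assumes \<Omega>: "in_Omega \<alpha> \<beta> \<delta>" and a: "a = 1/2 \<or> a = -1/2"
    and P: "is_P_omega \<alpha> \<beta> \<delta> N a P" and lam: "lam \<in> JN N"
  shows "P lam / dim_denom a N lam * char_scale a ^ N
       = 2 powr (real N * (real N - 1) / 2) *
         Determinant.det (Matrix.mat N N (\<lambda>(i, j). f_fun \<alpha> \<beta> \<delta> N a (j + 1) (shifted N lam i)))"
proof -
  define k where "k = shifted N lam"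
  define \<nu> where "\<nu> = (\<Prod>j<N. jacobi_norm a (k j))"
  define v where "v = P lam / dim_denom a N lam * char_scale a ^ N * \<nu>"
  define D where "D = Determinant.det (Matrix.mat N N (\<lambda>(i, j). f_fun \<alpha> \<beta> \<delta> N a (j + 1) (k i)))"
  \<comment> \<open>By orthogonality only the term of \<open>lam\<close> survives the integration.\<close>
  have "integral\<^sup>L (Pi\<^sub>M {..<N} (\<lambda>_. lborel))
          (\<lambda>\<theta>. P l / dim_denom a N l * (char_num a N l \<theta> * (\<Prod>j<N. test_fn a (k j) (\<theta> j))))
      = (if l = lam then v else 0)" if "l \<in> JN N" for l
    using integral_char_num_mult_test_fn[OF a that lam]
    by (simp add: k_def \<nu>_def v_def prod.distrib)
  with has_sum_integral_P_omega_expansion[OF a P, of k]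
  have "((\<lambda>l. if l = lam then v else 0) has_sum
          integral\<^sup>L (Pi\<^sub>M {..<N} (\<lambda>_. lborel)) (\<lambda>\<theta>. char_denom N \<theta> *
            (\<Prod>j<N. E_omega \<alpha> \<beta> \<delta> (cos (\<theta> j))) * (\<Prod>j<N. test_fn a (k j) (\<theta> j)))) (JN N)"
    by (simp cong: has_sum_cong)
  then have "((\<lambda>l. if l = lam then v else 0) has_sum 2 powr (real N * (real N - 1) / 2) * \<nu> * D) (JN N)"
    unfolding integral_char_denom_mult_test_fn[OF \<Omega> a] \<nu>_def D_def .
  moreover have "((\<lambda>l. if l = lam then v else 0) has_sum v) (JN N)"
    using lam has_sum_finite[of "{lam}" "\<lambda>_. v"]
    by (subst has_sum_cong_neutral[where T="{lam}" and g="\<lambda>_. v"]) auto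
  ultimately have "2 powr (real N * (real N - 1) / 2) * \<nu> * D = v"
    by (rule has_sum_unique)
  then have "\<nu> * (P lam / dim_denom a N lam * char_scale a ^ N)
      = \<nu> * (2 powr (real N * (real N - 1) / 2) * D)"
    unfolding v_def by (simp only: mult_ac)
  moreover have "\<nu> \<noteq> 0"
    unfolding \<nu>_def by (intro prod_pos less_imp_neq[symmetric]) (auto intro: jacobi_norm_pos)
  ultimately show ?thesis
    unfolding k_def D_def using mult_left_cancel by blast
qed

lemma C_const_normalisation:
  assumes "a = 1/2 \<or> a = -1/2"
  shows "C_const N a * char_scale a ^ N * dim_a N a lam
       = 2 powr (real N * (real N - 1) / 2) * dim_denom a N lam"
proof (cases "a = 1/2")
  case True
  then show ?thesis
    by (simp add: C_const_def char_scale_def dim_a_def dim_denom_def mult_ac)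
next
  case False
  have "2 powr ((real N - 2) * (real N - 1) / 2) * 2 ^ N = 2 powr ((real N - 2) * (real N - 1) / 2 + real N)"
    by (simp add: powr_add powr_realpow)
  also have "(real N - 2) * (real N - 1) / 2 + real N = real N * (real N - 1) / 2 + 1"
    by (simp add: field_simps)
  finally show ?thesis
    using False assms by (simp add: C_const_def char_scale_def dim_a_def dim_denom_def powr_add mult_ac)
qed

theorem theorem2p8:
  fixes \<alpha> \<beta> :: "nat \<Rightarrow> real" and \<delta> a :: real and N :: nat
    and P :: "nat list \<Rightarrow> real" and lam :: "nat list"
  assumes "in_Omega \<alpha> \<beta> \<delta>"
    and "N \<ge> 1"
    and "a = 1/2 \<or> a = -1/2"
    and "is_P_omega \<alpha> \<beta> \<delta> N a P"
    and "lam \<in> JN N"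
  shows "P lam = C_const N a *
           Determinant.det (Matrix.mat N N (\<lambda>(i, j). f_fun \<alpha> \<beta> \<delta> N a (j + 1) (lam ! i + (N - 1 - i))))
           * dim_a N a lam"
proof -
  let ?D = "Determinant.det (Matrix.mat N N (\<lambda>(i, j). f_fun \<alpha> \<beta> \<delta> N a (j + 1) (lam ! i + (N - 1 - i))))"
  let ?K = "2 powr (real N * (real N - 1) / 2) :: real"
  have "dim_denom a N lam \<noteq> 0"
    using dim_denom_ge_1[OF assms(5), of a] by simp
  then have "P lam * char_scale a ^ N = ?K * dim_denom a N lam * ?D"
    using P_omega_det_identity[OF assms(1,3,4,5)] by (simp add: shifted_def field_simps)
  also have "\<dots> = char_scale a ^ N * (C_const N a * ?D * dim_a N a lam)"
    using C_const_normalisation[OF assms(3), of N lam] by (simp add: mult_ac)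
  finally have "P lam * char_scale a ^ N = char_scale a ^ N * (C_const N a * ?D * dim_a N a lam)" .
  moreover have "char_scale a ^ N \<noteq> 0"
    by (simp add: char_scale_def)
  ultimately show ?thesis
    by (metis mult.commute mult_left_cancel)
qed

end
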